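(* Let $(M,g)$ be a $4$-dimensional semi-Riemannian manifold whose metric $g$ is an Einstein metric, equipped with a semi-symmetric metric connection $\nabla$ with associated one-form $\pi$. Then $(M,g,\nabla)$ is a generalized Einstein manifold if and only if $$-\overset{\circ}{\nabla}_\mu\pi_\nu-\overset{\circ}{\nabla}_\nu\pi_\mu+2\pi_\nu\pi_\mu+\frac12 g_{\mu\nu}\overset{\circ}{\nabla}_\lambda\pi^\lambda-\frac12 g_{\mu\nu}\pi_\lambda\pi^\lambda=0.$$
   Context: $\overset{\circ}{\nabla}$, $\overset{\circ}{R}_{\mu\nu}$ are the Levi-Civita connection and Ricci tensor of $g$; indices are raised/lowered with $g$. $g$ is an Einstein metric if $\overset{\circ}{R}_{\mu\nu}=\lambda g_{\mu\nu}$ for some smooth function $\lambda$. A semi-symmetric metric connection is an affine connection $\nabla$ with $\nabla g=0$ whose torsion $T(\omega,X,Y)=\omega(\nabla_XY-\nabla_YX-[X,Y])$ equals $\omega(\pi(Y)X-\pi(X)Y)$ for a one-form $\pi$. Curvature conventions: $\mathrm{Riem}(\omega,Z,X,Y)=\omega(\nabla_X\nabla_YZ-\nabla_Y\nabla_XZ-\nabla_{[X,Y]}Z)$, $R_{\mu\nu}=\mathrm{Riem}(dx^\alpha,\partial_\mu,\partial_\alpha,\partial_\nu)$, $R_{(\mu\nu)}=\frac12(R_{\mu\nu}+R_{\nu\mu})$. $(M,g,\nabla)$ is a generalized Einstein manifold if $R_{(\mu\nu)}=\lambda' g_{\mu\nu}$ for some smooth function $\lambda'$. *)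

theory Defs
  imports "HOL-Analysis.Analysis"
begin

text \<open>Points of a coordinate chart are vectors in
real^4; coordinate indices range over the 4-element type 4.  All tensor fields are
given by their components in the coordinate frame.\<close>

type_synonym pt = "real^4"
type_synonym idx = 4

definition pd :: "(pt \<Rightarrow> real) \<Rightarrow> idx \<Rightarrow> pt \<Rightarrow> real" where
  "pd f i x = frechet_derivative f (at x) (axis i 1)"

fun pds :: "idx list \<Rightarrow> (pt \<Rightarrow> real) \<Rightarrow> pt \<Rightarrow> real" where
  "pds [] f = f"
| "pds (i # is) f = pd (pds is f) i"

definition smooth_on :: "pt set \<Rightarrow> (pt \<Rightarrow> real) \<Rightarrow> bool" where
  "smooth_on U f \<longleftrightarrow> (\<forall>is. \<forall>x\<in>U. pds is f differentiable (at x))"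

definition semi_riemannian_metric :: "pt set \<Rightarrow> (pt \<Rightarrow> real^4^4) \<Rightarrow> bool" where
  "semi_riemannian_metric U g \<longleftrightarrow>
     (\<forall>m n. smooth_on U (\<lambda>x. g x $ m $ n)) \<and>
     (\<forall>x\<in>U. \<forall>m n. g x $ m $ n = g x $ n $ m) \<and>
     (\<forall>x\<in>U. det (g x) \<noteq> 0)"

definition ginv :: "(pt \<Rightarrow> real^4^4) \<Rightarrow> pt \<Rightarrow> idx \<Rightarrow> idx \<Rightarrow> real" where
  "ginv g x m n = matrix_inv (g x) $ m $ n"

text \<open>Connection coefficients: Gam x l m n = Gamma^l_{mn}, with
  nabla_{d_m} d_n = sum_l Gamma^l_{mn} d_l.\<close>
type_synonym conn = "pt \<Rightarrow> idx \<Rightarrow> idx \<Rightarrow> idx \<Rightarrow> real"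

definition LC :: "(pt \<Rightarrow> real^4^4) \<Rightarrow> conn" where
  "LC g x l m n = (1/2) * (\<Sum>s\<in>UNIV. ginv g x l s *
      (pd (\<lambda>y. g y $ s $ n) m x + pd (\<lambda>y. g y $ s $ m) n x - pd (\<lambda>y. g y $ m $ n) s x))"

text \<open>Riemann tensor Riem(dx^a, d_b, d_m, d_n) of a connection with the convention
  Riem(w,Z,X,Y) = w(nabla_X nabla_Y Z - nabla_Y nabla_X Z - nabla_[X,Y] Z).\<close>
definition Riem :: "conn \<Rightarrow> pt \<Rightarrow> idx \<Rightarrow> idx \<Rightarrow> idx \<Rightarrow> idx \<Rightarrow> real" where
  "Riem G x a b m n =
     pd (\<lambda>y. G y a n b) m x - pd (\<lambda>y. G y a m b) n x
     + (\<Sum>s\<in>UNIV. G x s n b * G x a m s - G x s m b * G x a n s)"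

definition Ric :: "conn \<Rightarrow> pt \<Rightarrow> idx \<Rightarrow> idx \<Rightarrow> real" where
  "Ric G x m n = (\<Sum>a\<in>UNIV. Riem G x a m a n)"

definition sym_Ric :: "conn \<Rightarrow> pt \<Rightarrow> idx \<Rightarrow> idx \<Rightarrow> real" where
  "sym_Ric G x m n = (Ric G x m n + Ric G x n m) / 2"

definition einstein_metric :: "pt set \<Rightarrow> (pt \<Rightarrow> real^4^4) \<Rightarrow> bool" where
  "einstein_metric U g \<longleftrightarrow>
     (\<exists>lam. smooth_on U lam \<and>
        (\<forall>x\<in>U. \<forall>m n. Ric (LC g) x m n = lam x * g x $ m $ n))"

text \<open>Semi-symmetric metric connection with one-form pi (components pi x n):
  smooth coefficients, nabla g = 0, torsion T(dx^l, d_m, d_n) = delta^l_m pi_n - delta^l_n pi_m.\<close>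
definition semi_symmetric_metric_connection ::
    "pt set \<Rightarrow> (pt \<Rightarrow> real^4^4) \<Rightarrow> conn \<Rightarrow> (pt \<Rightarrow> idx \<Rightarrow> real) \<Rightarrow> bool" where
  "semi_symmetric_metric_connection U g G p \<longleftrightarrow>
     (\<forall>l m n. smooth_on U (\<lambda>x. G x l m n)) \<and>
     (\<forall>n. smooth_on U (\<lambda>x. p x n)) \<and>
     (\<forall>x\<in>U. \<forall>m n r. pd (\<lambda>y. g y $ n $ r) m x
          - (\<Sum>s\<in>UNIV. G x s m n * g x $ s $ r)
          - (\<Sum>s\<in>UNIV. G x s m r * g x $ n $ s) = 0) \<and>
     (\<forall>x\<in>U. \<forall>l m n. G x l m n - G x l n m =
          (if l = m then p x n else 0) - (if l = n then p x m else 0))"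

definition generalized_einstein :: "pt set \<Rightarrow> (pt \<Rightarrow> real^4^4) \<Rightarrow> conn \<Rightarrow> bool" where
  "generalized_einstein U g G \<longleftrightarrow>
     (\<exists>lam'. smooth_on U lam' \<and>
        (\<forall>x\<in>U. \<forall>m n. sym_Ric G x m n = lam' x * g x $ m $ n))"

definition cov_LC :: "(pt \<Rightarrow> real^4^4) \<Rightarrow> (pt \<Rightarrow> idx \<Rightarrow> real) \<Rightarrow> pt \<Rightarrow> idx \<Rightarrow> idx \<Rightarrow> real" where
  "cov_LC g w x m n = pd (\<lambda>y. w y n) m x - (\<Sum>l\<in>UNIV. LC g x l m n * w x l)"

end

theory Submission
  imports Defs
begin

(* A metric connection is determined by its torsion (Koszul formula), so the semi-symmetric
   connection is the Levi-Civita connection plus the contorsion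
   K^l_mn = delta^l_m pi_n - g_mn pi^l.  Expanding the Ricci tensor of LC + K in dimension N gives
     R_mn = R'_mn - (N-2) nabla'_n pi_m - g_mn div pi + (N-2) (pi_m pi_n - g_mn |pi|^2).
   For N = 4 and R'_mn = lambda g_mn, this says R_(mn) = (lambda - 3/2 div pi - 3/2 |pi|^2) g_mn + E_mn
   with E the tensor of the statement.  E is trace-free, so R_(mn) is a multiple of g_mn exactly when
   E = 0. *)

section \<open>Partial derivatives and smoothness\<close>

lemma pd_eqI: "(f has_derivative D) (at x) \<Longrightarrow> pd f i x = D (axis i 1)"
  unfolding pd_def using frechet_derivative_at by metis

lemma pd_eq_on_open:
  assumes "open U" "x \<in> U" "\<And>y. y \<in> U \<Longrightarrow> f y = f' y"
  shows "pd f i x = pd f' i x"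
proof -
  have "(f has_derivative D) (at x) \<longleftrightarrow> (f' has_derivative D) (at x)" for D
    using has_derivative_transform_within_open[OF _ assms(1,2)] assms(3) by metis
  then show ?thesis unfolding pd_def frechet_derivative_def by simp
qed

lemma differentiable_eq_on_open:
  assumes "open U" "x \<in> U" "\<And>y. y \<in> U \<Longrightarrow> f y = f' y" "f differentiable at x"
  shows "f' differentiable at x"
  using assms has_derivative_transform_within_open unfolding differentiable_def by metis

lemma differentiable_if_const:
  "f differentiable at x \<Longrightarrow> (\<lambda>y. if c then k else f y) differentiable at x"
  by (cases c) auto

lemma differentiable_prod:
  fixes f :: "'i \<Rightarrow> 'a::real_normed_vector \<Rightarrow> real"
  assumes "\<And>i. i \<in> I \<Longrightarrow> f i differentiable at x"
  shows "(\<lambda>y. \<Prod>i\<in>I. f i y) differentiable at x"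
proof -
  obtain D where "\<And>i. i \<in> I \<Longrightarrow> (f i has_derivative D i) (at x)"
    using assms unfolding differentiable_def by metis
  then show ?thesis
    unfolding differentiable_def by (blast intro: has_derivative_prod)
qed

lemma differentiable_det:
  fixes M :: "'a::real_normed_vector \<Rightarrow> real^'n^'n"
  assumes "\<And>i j. (\<lambda>y. M y $ i $ j) differentiable at x"
  shows "(\<lambda>y. det (M y)) differentiable at x"
  unfolding det_def
  by (intro differentiable_sum differentiable_mult differentiable_const differentiable_prod ballI assms)
     (simp add: finite_permutations)

lemmas has_derivative_frechet = frechet_derivative_works[THEN iffD1]

lemma pd_add: "f differentiable at x \<Longrightarrow> g differentiable at x \<Longrightarrow>
    pd (\<lambda>y. f y + g y) i x = pd f i x + pd g i x"
  unfolding pd_def[of f] pd_def[of g] by (rule pd_eqI, intro derivative_intros has_derivative_frechet)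

lemma pd_diff: "f differentiable at x \<Longrightarrow> g differentiable at x \<Longrightarrow>
    pd (\<lambda>y. f y - g y) i x = pd f i x - pd g i x"
  unfolding pd_def[of f] pd_def[of g] by (rule pd_eqI, intro derivative_intros has_derivative_frechet)

lemma pd_mult: "f differentiable at x \<Longrightarrow> g differentiable at x \<Longrightarrow>
    pd (\<lambda>y. f y * g y) i x = f x * pd g i x + pd f i x * g x"
  unfolding pd_def[of f] pd_def[of g] by (rule pd_eqI, intro derivative_intros has_derivative_frechet)

lemma pd_inverse: "f differentiable at x \<Longrightarrow> f x \<noteq> 0 \<Longrightarrow>
    pd (\<lambda>y. inverse (f y)) i x = - (inverse (f x) * pd f i x * inverse (f x))"
  unfolding pd_def[of f] by (rule pd_eqI, intro derivative_intros has_derivative_frechet) auto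

lemma pd_sum: "(\<And>a. a \<in> S \<Longrightarrow> f a differentiable at x) \<Longrightarrow>
    pd (\<lambda>y. \<Sum>a\<in>S. f a y) i x = (\<Sum>a\<in>S. pd (f a) i x)"
  unfolding pd_def[of "f _"] by (rule pd_eqI, intro has_derivative_sum has_derivative_frechet)

lemma pd_const [simp]: "pd (\<lambda>y. c) i = (\<lambda>y. 0)"
  using pd_eqI[OF has_derivative_const] by fastforce

lemma pds_append_single: "pds (is @ [i]) f = pds is (pd f i)"
  by (induction "is") auto

lemma pds_eq_on_open:
  "open U \<Longrightarrow> (\<And>z. z \<in> U \<Longrightarrow> f z = f' z) \<Longrightarrow> y \<in> U \<Longrightarrow> pds is f y = pds is f' y"
proof (induction "is" arbitrary: y)
  case (Cons i "is")
  then show ?case using pd_eq_on_open[of U y "pds is f" "pds is f'"] by simp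
qed simp

definition differentiable_upto :: "nat \<Rightarrow> pt set \<Rightarrow> (pt \<Rightarrow> real) \<Rightarrow> bool" where
  "differentiable_upto k U f \<longleftrightarrow> (\<forall>is. length is \<le> k \<longrightarrow> (\<forall>x\<in>U. pds is f differentiable at x))"

lemma smooth_on_iff_differentiable_upto: "smooth_on U f \<longleftrightarrow> (\<forall>k. differentiable_upto k U f)"
  unfolding smooth_on_def differentiable_upto_def by blast

lemma differentiable_upto_0: "differentiable_upto 0 U f \<longleftrightarrow> (\<forall>x\<in>U. f differentiable at x)"
  unfolding differentiable_upto_def by auto

lemma differentiable_upto_Suc:
  "differentiable_upto (Suc k) U f \<longleftrightarrow>
     (\<forall>x\<in>U. f differentiable at x) \<and> (\<forall>i. differentiable_upto k U (pd f i))"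
proof -
  have "(\<forall>is. length is \<le> Suc k \<longrightarrow> P is) \<longleftrightarrow>
        P [] \<and> (\<forall>i is. length is \<le> k \<longrightarrow> P (is @ [i]))" for P :: "idx list \<Rightarrow> bool"
  proof (intro iffI conjI allI impI)
    fix js :: "idx list" assume "P [] \<and> (\<forall>i is. length is \<le> k \<longrightarrow> P (is @ [i]))" "length js \<le> Suc k"
    then show "P js" by (cases js rule: rev_cases) auto
  qed auto
  from this[of "\<lambda>is. \<forall>x\<in>U. pds is f differentiable at x"] show ?thesis
    unfolding differentiable_upto_def pds_append_single by auto
qed

lemma differentiable_upto_Suc_D: "differentiable_upto (Suc k) U f \<Longrightarrow> differentiable_upto k U f"
  unfolding differentiable_upto_def by auto

lemma differentiable_upto_eq_on_open:
  assumes "open U" "\<And>y. y \<in> U \<Longrightarrow> f y = f' y" "differentiable_upto k U f"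
  shows "differentiable_upto k U f'"
  unfolding differentiable_upto_def
proof (intro allI impI ballI)
  fix "is" :: "idx list" and x assume "length is \<le> k" "x \<in> U"
  then have "pds is f differentiable at x"
    using assms(3) unfolding differentiable_upto_def by blast
  from differentiable_eq_on_open[OF assms(1) \<open>x \<in> U\<close> pds_eq_on_open[OF assms(1,2)] this]
  show "pds is f' differentiable at x" .
qed

lemma differentiable_upto_const: "differentiable_upto k U (\<lambda>y. c)"
  by (induction k arbitrary: c) (simp_all add: differentiable_upto_0 differentiable_upto_Suc)

lemma differentiable_upto_add:
  "open U \<Longrightarrow> differentiable_upto k U f \<Longrightarrow> differentiable_upto k U g \<Longrightarrow>
    differentiable_upto k U (\<lambda>y. f y + g y)"
proof (induction k arbitrary: f g)
  case 0 then show ?case by (simp add: differentiable_upto_0)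
next
  case (Suc k)
  have "differentiable_upto k U (\<lambda>y. pd f i y + pd g i y)" for i
    using Suc by (simp add: differentiable_upto_Suc)
  then have "differentiable_upto k U (pd (\<lambda>y. f y + g y) i)" for i
    by (rule differentiable_upto_eq_on_open[OF \<open>open U\<close>, rotated])
      (use Suc.prems in \<open>auto simp: differentiable_upto_Suc pd_add\<close>)
  with Suc.prems show ?case by (simp add: differentiable_upto_Suc)
qed

lemma differentiable_upto_mult:
  "open U \<Longrightarrow> differentiable_upto k U f \<Longrightarrow> differentiable_upto k U g \<Longrightarrow>
    differentiable_upto k U (\<lambda>y. f y * g y)"
proof (induction k arbitrary: f g)
  case 0 then show ?case by (simp add: differentiable_upto_0)
next
  case (Suc k)
  have "differentiable_upto k U (\<lambda>y. f y * pd g i y + pd f i y * g y)" for i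
    using Suc differentiable_upto_Suc_D
    by (intro differentiable_upto_add) (auto simp: differentiable_upto_Suc)
  then have "differentiable_upto k U (pd (\<lambda>y. f y * g y) i)" for i
    by (rule differentiable_upto_eq_on_open[OF \<open>open U\<close>, rotated])
      (use Suc.prems in \<open>auto simp: differentiable_upto_Suc pd_mult\<close>)
  with Suc.prems show ?case by (simp add: differentiable_upto_Suc)
qed

lemma differentiable_upto_inverse:
  "open U \<Longrightarrow> differentiable_upto k U f \<Longrightarrow> (\<And>y. y \<in> U \<Longrightarrow> f y \<noteq> 0) \<Longrightarrow>
    differentiable_upto k U (\<lambda>y. inverse (f y))"
proof (induction k arbitrary: f)
  case 0 then show ?case by (simp add: differentiable_upto_0)
next
  case (Suc k)
  have "differentiable_upto k U (\<lambda>y. inverse (f y))"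
    using Suc differentiable_upto_Suc_D by blast
  then have "differentiable_upto k U (\<lambda>y. (-1) * (inverse (f y) * pd f i y * inverse (f y)))" for i
    using Suc.prems by (intro differentiable_upto_mult differentiable_upto_const)
      (auto simp: differentiable_upto_Suc)
  then have "differentiable_upto k U (pd (\<lambda>y. inverse (f y)) i)" for i
    by (rule differentiable_upto_eq_on_open[OF \<open>open U\<close>, rotated])
      (use Suc.prems in \<open>auto simp: differentiable_upto_Suc pd_inverse\<close>)
  with Suc.prems show ?case by (simp add: differentiable_upto_Suc)
qed

lemma smooth_on_const: "smooth_on U (\<lambda>y. c)"
  by (simp add: smooth_on_iff_differentiable_upto differentiable_upto_const)

lemma smooth_on_add:
  "open U \<Longrightarrow> smooth_on U f \<Longrightarrow> smooth_on U g \<Longrightarrow> smooth_on U (\<lambda>y. f y + g y)"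
  by (simp add: smooth_on_iff_differentiable_upto differentiable_upto_add)

lemma smooth_on_mult:
  "open U \<Longrightarrow> smooth_on U f \<Longrightarrow> smooth_on U g \<Longrightarrow> smooth_on U (\<lambda>y. f y * g y)"
  by (simp add: smooth_on_iff_differentiable_upto differentiable_upto_mult)

lemma smooth_on_diff:
  assumes "open U" "smooth_on U f" "smooth_on U g"
  shows "smooth_on U (\<lambda>y. f y - g y)"
  using smooth_on_add[OF assms(1,2) smooth_on_mult[OF assms(1) smooth_on_const assms(3)], of "-1"]
  by simp

lemma smooth_on_inverse:
  "open U \<Longrightarrow> smooth_on U f \<Longrightarrow> (\<And>y. y \<in> U \<Longrightarrow> f y \<noteq> 0) \<Longrightarrow>
    smooth_on U (\<lambda>y. inverse (f y))"
  by (simp add: smooth_on_iff_differentiable_upto differentiable_upto_inverse)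

lemma smooth_on_sum:
  assumes "open U" "finite S" "\<And>a. a \<in> S \<Longrightarrow> smooth_on U (f a)"
  shows "smooth_on U (\<lambda>y. \<Sum>a\<in>S. f a y)"
  using assms(2,3) by (induction S rule: finite_induct) (simp_all add: smooth_on_const smooth_on_add assms(1))

lemma smooth_on_pd: "smooth_on U f \<Longrightarrow> smooth_on U (pd f i)"
  unfolding smooth_on_def by (metis pds_append_single)

lemma smooth_on_imp_differentiable: "smooth_on U f \<Longrightarrow> x \<in> U \<Longrightarrow> f differentiable at x"
  unfolding smooth_on_def by (metis pds.simps(1))

section \<open>Inverse of a nonsingular matrix\<close>

lemma matrix_inv_det_nz:
  fixes A :: "'a::field^'n^'n"
  assumes "det A \<noteq> 0"
  shows "A ** matrix_inv A = mat 1" "matrix_inv A ** A = mat 1"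
proof -
  have "\<exists>A'. A ** A' = mat 1 \<and> A' ** A = mat 1"
    using assms invertible_det_nz invertible_def by blast
  then have "A ** matrix_inv A = mat 1 \<and> matrix_inv A ** A = mat 1"
    unfolding matrix_inv_def by (rule someI_ex)
  then show "A ** matrix_inv A = mat 1" "matrix_inv A ** A = mat 1" by auto
qed

lemma sum_matrix_inv_det_nz:
  fixes A :: "'a::field^'n^'n"
  assumes "det A \<noteq> 0"
  shows "(\<Sum>s\<in>UNIV. A $ i $ s * matrix_inv A $ s $ j) = (if i = j then 1 else 0)"
    and "(\<Sum>s\<in>UNIV. matrix_inv A $ i $ s * A $ s $ j) = (if i = j then 1 else 0)"
  using arg_cong[OF matrix_inv_det_nz(1)[OF assms], of "\<lambda>B. B $ i $ j"]
    arg_cong[OF matrix_inv_det_nz(2)[OF assms], of "\<lambda>B. B $ i $ j"]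
  unfolding matrix_matrix_mult_def mat_def by simp_all

lemma matrix_inv_symmetric:
  fixes A :: "'a::field^'n^'n"
  assumes "det A \<noteq> 0" "transpose A = A"
  shows "transpose (matrix_inv A) = matrix_inv A"
proof -
  let ?B = "matrix_inv A"
  have "transpose ?B ** A = mat 1"
    using arg_cong[OF matrix_inv_det_nz(1)[OF assms(1)], of transpose] assms(2)
    by (simp add: matrix_transpose_mul transpose_mat)
  then have "transpose ?B = ?B"
    using matrix_inv_det_nz(1)[OF assms(1)] by (metis matrix_mul_assoc matrix_mul_lid matrix_mul_rid)
  then show ?thesis .
qed

lemma matrix_inv_cramer:
  fixes A :: "'a::field^'n^'n"
  assumes "det A \<noteq> 0"
  shows "matrix_inv A $ i $ j = det (\<chi> a b. if b = i then (if a = j then 1 else 0) else A $ a $ b) / det A"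
proof -
  let ?e = "\<chi> a. if a = j then (1::'a) else 0"
  have "A *v (\<chi> k. matrix_inv A $ k $ j) = ?e"
    using sum_matrix_inv_det_nz(1)[OF assms] by (simp add: matrix_vector_mult_def vec_eq_iff)
  from cramer[OF assms, of _ ?e, THEN iffD1, OF this, THEN arg_cong, of "\<lambda>v. v $ i"]
  show ?thesis by (simp add: if_distrib cong: if_cong)
qed

lemma trace_matrix_inv_symmetric:
  fixes A :: "'a::field^'n^'n"
  assumes "det A \<noteq> 0" "\<And>i j. A $ i $ j = A $ j $ i"
  shows "(\<Sum>m\<in>UNIV. \<Sum>n\<in>UNIV. matrix_inv A $ m $ n * A $ m $ n) = of_nat CARD('n)"
  using sum_matrix_inv_det_nz(2)[OF assms(1)] by (simp add: assms(2)[of _ "_ :: 'n"])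

section \<open>Pointwise tensor algebra\<close>

definition contorsion :: "real^'n^'n \<Rightarrow> ('n \<Rightarrow> real) \<Rightarrow> ('n \<Rightarrow> real) \<Rightarrow> 'n \<Rightarrow> 'n \<Rightarrow> 'n \<Rightarrow> real" where
  "contorsion g w W l m n = (if l = m then w n else 0) - g $ m $ n * W l"

(* dG k l m n stands for the partial derivative d_k G^l_mn. *)
definition ricci_jet ::
    "('n \<Rightarrow> 'n \<Rightarrow> 'n \<Rightarrow> 'n \<Rightarrow> real) \<Rightarrow> ('n \<Rightarrow> 'n \<Rightarrow> 'n \<Rightarrow> real) \<Rightarrow> 'n \<Rightarrow> 'n \<Rightarrow> real" where
  "ricci_jet dG G m n =
     (\<Sum>a\<in>UNIV. dG a a n m - dG n a a m + (\<Sum>s\<in>UNIV. G s n m * G a a s - G s a m * G a n s))"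

lemma Ric_eq_ricci_jet: "Ric G x m n = ricci_jet (\<lambda>k l m n. pd (\<lambda>y. G y l m n) k x) (G x) m n"
  unfolding Ric_def Riem_def ricci_jet_def by simp

lemma ricci_jet_add:
  "ricci_jet (\<lambda>k l m n. dL k l m n + dK k l m n) (\<lambda>l m n. L l m n + K l m n) m n =
     ricci_jet dL L m n + ricci_jet dK K m n
     + (\<Sum>a\<in>UNIV. \<Sum>s\<in>UNIV. L s n m * K a a s + K s n m * L a a s - L s a m * K a n s - K s a m * L a n s)"
  unfolding ricci_jet_def by (simp add: algebra_simps sum.distrib sum_subtractf)

lemma contorsion_trace:
  "(\<Sum>a\<in>UNIV. contorsion g w W a a s) = real CARD('n) * w s - (\<Sum>a\<in>UNIV. g $ a $ s * W a)"
  for g :: "real^'n^'n"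
  by (simp add: contorsion_def sum_subtractf)

lemma mult_if_zero:
  "(if c then a else 0) * b = (if c then a * b else 0)"
  "b * (if c then a else 0) = (if c then b * a else 0)"
  for a b :: "'a::mult_zero"
  by simp_all

lemma sum_if_zero: "(\<Sum>s\<in>S. if c then f s else 0) = (if c then sum f S else 0)"
  by simp

context
  fixes g :: "real^'n^'n" and w W :: "'n \<Rightarrow> real"
  assumes g_sym: "\<And>i j. g $ i $ j = g $ j $ i"
    and lower_W: "\<And>s. (\<Sum>a\<in>UNIV. g $ a $ s * W a) = w s"
begin

lemma contorsion_trace_lower: "(\<Sum>a\<in>UNIV. contorsion g w W a a s) = (real CARD('n) - 1) * w s"
  using contorsion_trace[of g w W s] lower_W[of s] by (simp add: algebra_simps)

lemma contorsion_quadratic: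
  defines "K \<equiv> contorsion g w W"
  shows "(\<Sum>a\<in>UNIV. \<Sum>s\<in>UNIV. K s n m * K a a s - K s a m * K a n s)
    = (real CARD('n) - 2) * (w m * w n - g $ n $ m * (\<Sum>s\<in>UNIV. W s * w s))"
proof -
  have lower_W': "(\<Sum>a\<in>UNIV. g $ s $ a * W a) = w s" for s
    using lower_W[of s] by (simp add: g_sym[of s])
  have "(\<Sum>a\<in>UNIV. \<Sum>s\<in>UNIV. K s n m * K a a s) = (\<Sum>s\<in>UNIV. K s n m * (\<Sum>a\<in>UNIV. K a a s))"
    by (subst sum.swap) (simp add: sum_distrib_left)
  also have "\<dots> = (real CARD('n) - 1) * (w n * w m - g $ n $ m * (\<Sum>s\<in>UNIV. W s * w s))"
    unfolding K_def contorsion_trace_lower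
    by (simp add: contorsion_def algebra_simps sum.distrib sum_subtractf sum_distrib_left mult_if_zero)
  finally have trace_part: "(\<Sum>a\<in>UNIV. \<Sum>s\<in>UNIV. K s n m * K a a s) = \<dots>" .
  have "K s a m * K a n s = (if s = a then (if a = n then w m * w s else 0) else 0)
       - (if s = a then w m * g $ n $ s * W a else 0) - (if a = n then g $ a $ m * W s * w s else 0)
       + g $ a $ m * W a * (g $ n $ s * W s)" for a s
    by (simp add: K_def contorsion_def algebra_simps)
  then have "(\<Sum>a\<in>UNIV. \<Sum>s\<in>UNIV. K s a m * K a n s) = w m * w n - g $ n $ m * (\<Sum>s\<in>UNIV. W s * w s)"
    using lower_W[of m] lower_W'[of n] sum_distrib_right[of "\<lambda>a. g $ a $ m * W a" UNIV "w n"]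
    by (simp add: sum.distrib sum_subtractf sum_distrib_left[symmetric] sum_distrib_right[symmetric]
        mult.assoc sum_if_zero)
  with trace_part show ?thesis
    by (simp add: sum_subtractf algebra_simps)
qed

lemma ricci_jet_contorsion:
  fixes dg :: "'n \<Rightarrow> 'n \<Rightarrow> 'n \<Rightarrow> real" and dw dW :: "'n \<Rightarrow> 'n \<Rightarrow> real"
  assumes lower_dW: "\<And>k m. (\<Sum>a\<in>UNIV. dg k a m * W a + g $ a $ m * dW k a) = dw k m"
  shows "ricci_jet (\<lambda>k l m n. contorsion g (dw k) (dW k) l m n - dg k m n * W l) (contorsion g w W) m n
    = (real CARD('n) - 2) * (w m * w n - g $ n $ m * (\<Sum>s\<in>UNIV. W s * w s) - dw n m)
      - g $ n $ m * (\<Sum>a\<in>UNIV. dW a a) - (\<Sum>a\<in>UNIV. dg a n m * W a)"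
proof -
  have div_part: "(\<Sum>a\<in>UNIV. contorsion g (dw a) (dW a) a n m) = dw n m - g $ n $ m * (\<Sum>a\<in>UNIV. dW a a)"
    by (simp add: contorsion_def sum_subtractf sum_distrib_left)
  have trace_part: "(\<Sum>a\<in>UNIV. contorsion g (dw n) (dW n) a a m)
      = real CARD('n) * dw n m - (\<Sum>a\<in>UNIV. g $ a $ m * dW n a)"
    by (rule contorsion_trace)
  have "(\<Sum>a\<in>UNIV. g $ a $ m * dW n a) = dw n m - (\<Sum>a\<in>UNIV. dg n a m * W a)"
    using lower_dW[of n m] by (simp add: sum.distrib)
  with div_part trace_part contorsion_quadratic[of n m] show ?thesis
    unfolding ricci_jet_def by (simp add: sum.distrib sum_subtractf algebra_simps)
qed

lemma contorsion_cross_terms: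
  fixes L :: "'n \<Rightarrow> 'n \<Rightarrow> 'n \<Rightarrow> real" and dg :: "'n \<Rightarrow> 'n \<Rightarrow> 'n \<Rightarrow> real"
  assumes L_sym: "\<And>l i j. L l i j = L l j i"
    and compat: "\<And>k i j. dg k i j = (\<Sum>s\<in>UNIV. L s k i * g $ s $ j + L s k j * g $ i $ s)"
  defines "K \<equiv> contorsion g w W"
  shows "(\<Sum>a\<in>UNIV. \<Sum>s\<in>UNIV. L s n m * K a a s + K s n m * L a a s - L s a m * K a n s - K s a m * L a n s)
    = (real CARD('n) - 2) * (\<Sum>s\<in>UNIV. L s n m * w s)
      - g $ n $ m * (\<Sum>a\<in>UNIV. \<Sum>s\<in>UNIV. L a a s * W s) + (\<Sum>a\<in>UNIV. dg a n m * W a)"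
proof -
  define l where "l s = (\<Sum>a\<in>UNIV. L a a s)" for s
  have LK: "(\<Sum>a\<in>UNIV. \<Sum>s\<in>UNIV. L s n m * K a a s) = (real CARD('n) - 1) * (\<Sum>s\<in>UNIV. L s n m * w s)"
    by (subst sum.swap) (simp add: K_def sum_distrib_left[symmetric] contorsion_trace_lower sum_distrib_left algebra_simps)
  have KL: "(\<Sum>a\<in>UNIV. \<Sum>s\<in>UNIV. K s n m * L a a s) = w m * l n - g $ n $ m * (\<Sum>s\<in>UNIV. W s * l s)"
    by (subst sum.swap) (simp add: K_def contorsion_def l_def algebra_simps sum_subtractf sum_distrib_left
        sum_distrib_right mult_if_zero sum_if_zero)
  have LK': "(\<Sum>a\<in>UNIV. \<Sum>s\<in>UNIV. L s a m * K a n s)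
      = (\<Sum>s\<in>UNIV. L s n m * w s) - (\<Sum>a\<in>UNIV. W a * (\<Sum>s\<in>UNIV. L s a m * g $ n $ s))"
    by (simp add: K_def contorsion_def algebra_simps sum_subtractf sum_distrib_left mult_if_zero sum_if_zero)
  have KL': "(\<Sum>a\<in>UNIV. \<Sum>s\<in>UNIV. K s a m * L a n s)
      = w m * l n - (\<Sum>a\<in>UNIV. W a * (\<Sum>s\<in>UNIV. L s a n * g $ s $ m))"
  proof -
    have "(\<Sum>a\<in>UNIV. \<Sum>s\<in>UNIV. g $ a $ m * W s * L a n s) = (\<Sum>a\<in>UNIV. W a * (\<Sum>s\<in>UNIV. L s a n * g $ s $ m))"
      by (subst sum.swap) (simp add: sum_distrib_left L_sym[of _ n] algebra_simps)
    then show ?thesis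
      by (simp add: K_def contorsion_def l_def algebra_simps sum_subtractf sum_distrib_left mult_if_zero
          sum_if_zero L_sym[of _ n])
  qed
  have "(\<Sum>a\<in>UNIV. W a * (\<Sum>s\<in>UNIV. L s a m * g $ n $ s)) + (\<Sum>a\<in>UNIV. W a * (\<Sum>s\<in>UNIV. L s a n * g $ s $ m))
      = (\<Sum>a\<in>UNIV. dg a n m * W a)"
    using compat by (simp add: sum.distrib[symmetric] distrib_left[symmetric] mult.commute add.commute)
  moreover have "(\<Sum>a\<in>UNIV. \<Sum>s\<in>UNIV. L a a s * W s) = (\<Sum>s\<in>UNIV. W s * l s)"
    by (subst sum.swap) (simp add: l_def sum_distrib_left mult.commute)
  ultimately show ?thesis using LK KL LK' KL'
    by (simp add: sum.distrib sum_subtractf algebra_simps)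
qed

lemma ricci_jet_plus_contorsion:
  fixes L :: "'n \<Rightarrow> 'n \<Rightarrow> 'n \<Rightarrow> real" and dL :: "'n \<Rightarrow> 'n \<Rightarrow> 'n \<Rightarrow> 'n \<Rightarrow> real"
    and dg :: "'n \<Rightarrow> 'n \<Rightarrow> 'n \<Rightarrow> real" and dw dW :: "'n \<Rightarrow> 'n \<Rightarrow> real"
  assumes "\<And>l i j. L l i j = L l j i"
    and "\<And>k i j. dg k i j = (\<Sum>s\<in>UNIV. L s k i * g $ s $ j + L s k j * g $ i $ s)"
    and "\<And>k m. (\<Sum>a\<in>UNIV. dg k a m * W a + g $ a $ m * dW k a) = dw k m"
  shows "ricci_jet (\<lambda>k l m n. dL k l m n + (contorsion g (dw k) (dW k) l m n - dg k m n * W l))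
      (\<lambda>l m n. L l m n + contorsion g w W l m n) m n
    = ricci_jet dL L m n - (real CARD('n) - 2) * (dw n m - (\<Sum>s\<in>UNIV. L s n m * w s))
      - g $ n $ m * ((\<Sum>a\<in>UNIV. dW a a) + (\<Sum>a\<in>UNIV. \<Sum>s\<in>UNIV. L a a s * W s))
      + (real CARD('n) - 2) * (w m * w n - g $ n $ m * (\<Sum>s\<in>UNIV. W s * w s))"
  unfolding ricci_jet_add ricci_jet_contorsion[OF assms(3)] contorsion_cross_terms[OF assms(1,2)]
  by (simp add: algebra_simps)

end

lemma koszul_formula:
  fixes A dg T :: "'n \<Rightarrow> 'n \<Rightarrow> 'n \<Rightarrow> real"
  assumes compat: "\<And>m n r. dg m n r = A r m n + A n m r"
    and torsion: "\<And>r m n. A r m n - A r n m = T r m n"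
  shows "2 * A r m n = dg m n r + dg n m r - dg r m n + T r m n - T n m r - T m n r"
  using compat[of m n r] compat[of n m r] compat[of r m n]
    torsion[of r m n] torsion[of n m r] torsion[of m n r]
  by linarith

section \<open>Semi-symmetric metric connections in a chart\<close>

definition raise_form :: "(pt \<Rightarrow> real^4^4) \<Rightarrow> (pt \<Rightarrow> idx \<Rightarrow> real) \<Rightarrow> pt \<Rightarrow> idx \<Rightarrow> real" where
  "raise_form g p y l = (\<Sum>r\<in>UNIV. ginv g y l r * p y r)"

definition div_form :: "(pt \<Rightarrow> real^4^4) \<Rightarrow> (pt \<Rightarrow> idx \<Rightarrow> real) \<Rightarrow> pt \<Rightarrow> real" where
  "div_form g p x = (\<Sum>l\<in>UNIV. \<Sum>k\<in>UNIV. ginv g x l k * cov_LC g p x l k)"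

definition sq_form :: "(pt \<Rightarrow> real^4^4) \<Rightarrow> (pt \<Rightarrow> idx \<Rightarrow> real) \<Rightarrow> pt \<Rightarrow> real" where
  "sq_form g p x = (\<Sum>l\<in>UNIV. \<Sum>k\<in>UNIV. ginv g x l k * p x l * p x k)"

definition einstein_defect :: "(pt \<Rightarrow> real^4^4) \<Rightarrow> (pt \<Rightarrow> idx \<Rightarrow> real) \<Rightarrow> pt \<Rightarrow> idx \<Rightarrow> idx \<Rightarrow> real" where
  "einstein_defect g p x m n = - cov_LC g p x m n - cov_LC g p x n m + 2 * p x n * p x m
     + (1/2) * g x $ m $ n * div_form g p x - (1/2) * g x $ m $ n * sq_form g p x"

locale semi_symmetric_chart =
  fixes U :: "pt set" and g :: "pt \<Rightarrow> real^4^4" and G :: conn and p :: "pt \<Rightarrow> idx \<Rightarrow> real"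
  assumes open_U: "open U"
    and metric: "semi_riemannian_metric U g"
    and connection: "semi_symmetric_metric_connection U g G p"
begin

lemma g_sym: "y \<in> U \<Longrightarrow> g y $ i $ j = g y $ j $ i"
  using metric unfolding semi_riemannian_metric_def by blast

lemma g_det_nz: "y \<in> U \<Longrightarrow> det (g y) \<noteq> 0"
  using metric unfolding semi_riemannian_metric_def by blast

lemma g_smooth: "smooth_on U (\<lambda>y. g y $ i $ j)"
  using metric unfolding semi_riemannian_metric_def by blast

lemma G_smooth: "smooth_on U (\<lambda>y. G y l m n)"
  using connection unfolding semi_symmetric_metric_connection_def by blast

lemma p_smooth: "smooth_on U (\<lambda>y. p y n)"
  using connection unfolding semi_symmetric_metric_connection_def by blast

lemma G_metric: "y \<in> U \<Longrightarrow>
    pd (\<lambda>y. g y $ n $ r) m y = (\<Sum>s\<in>UNIV. G y s m n * g y $ s $ r) + (\<Sum>s\<in>UNIV. G y s m r * g y $ n $ s)"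
  using connection unfolding semi_symmetric_metric_connection_def
  by (simp only: diff_diff_eq eq_iff_diff_eq_0[symmetric])

lemma G_torsion: "y \<in> U \<Longrightarrow>
    G y l m n - G y l n m = (if l = m then p y n else 0) - (if l = n then p y m else 0)"
  using connection unfolding semi_symmetric_metric_connection_def by blast

lemma g_differentiable: "y \<in> U \<Longrightarrow> (\<lambda>y. g y $ i $ j) differentiable at y"
  by (rule smooth_on_imp_differentiable[OF g_smooth])

lemma p_differentiable: "y \<in> U \<Longrightarrow> (\<lambda>y. p y n) differentiable at y"
  by (rule smooth_on_imp_differentiable[OF p_smooth])

lemma pd_g_differentiable: "y \<in> U \<Longrightarrow> pd (\<lambda>y. g y $ i $ j) k differentiable at y"
  by (rule smooth_on_imp_differentiable[OF smooth_on_pd[OF g_smooth]])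

lemma pd_g_sym: "y \<in> U \<Longrightarrow> pd (\<lambda>y. g y $ i $ j) k y = pd (\<lambda>y. g y $ j $ i) k y"
  by (rule pd_eq_on_open[OF open_U]) (auto intro: g_sym)

lemma ginv_g: "y \<in> U \<Longrightarrow> (\<Sum>s\<in>UNIV. ginv g y i s * g y $ s $ j) = (if i = j then 1 else 0)"
  unfolding ginv_def using sum_matrix_inv_det_nz(2)[OF g_det_nz] by blast

lemma g_ginv: "y \<in> U \<Longrightarrow> (\<Sum>s\<in>UNIV. g y $ i $ s * ginv g y s j) = (if i = j then 1 else 0)"
  unfolding ginv_def using sum_matrix_inv_det_nz(1)[OF g_det_nz] by blast

lemma ginv_sym: "y \<in> U \<Longrightarrow> ginv g y i j = ginv g y j i"
proof -
  assume y: "y \<in> U"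
  have "transpose (g y) = g y" using g_sym[OF y] by (simp add: transpose_def vec_eq_iff)
  then have "transpose (matrix_inv (g y)) = matrix_inv (g y)"
    using matrix_inv_symmetric g_det_nz[OF y] by blast
  then have "transpose (matrix_inv (g y)) $ i $ j = matrix_inv (g y) $ i $ j" by simp
  then show ?thesis unfolding ginv_def transpose_def by simp
qed

lemma ginv_differentiable: "x \<in> U \<Longrightarrow> (\<lambda>y. ginv g y i j) differentiable at x"
proof -
  assume x: "x \<in> U"
  let ?f = "\<lambda>y. det (\<chi> a b. if b = i then (if a = j then 1 else 0) else g y $ a $ b) / det (g y)"
  have "?f differentiable at x"
    using g_det_nz[OF x]
    by (intro differentiable_divide differentiable_det)
      (auto intro!: differentiable_if_const g_differentiable[OF x])
  moreover have "?f y = ginv g y i j" if "y \<in> U" for y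
    unfolding ginv_def by (rule matrix_inv_cramer[OF g_det_nz[OF that], symmetric])
  ultimately show ?thesis by (rule differentiable_eq_on_open[OF open_U x, rotated])
qed

lemma raise_form_differentiable: "x \<in> U \<Longrightarrow> (\<lambda>y. raise_form g p y l) differentiable at x"
  unfolding raise_form_def
  by (intro differentiable_sum differentiable_mult ginv_differentiable p_differentiable ballI) auto

lemma LC_differentiable: "x \<in> U \<Longrightarrow> (\<lambda>y. LC g y l m n) differentiable at x"
  unfolding LC_def
  by (intro differentiable_sum differentiable_mult differentiable_add differentiable_diff
      differentiable_const ginv_differentiable pd_g_differentiable ballI) auto

lemma contorsion_differentiable:
  "x \<in> U \<Longrightarrow> (\<lambda>y. contorsion (g y) (p y) (raise_form g p y) l m n) differentiable at x"
  unfolding contorsion_def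
  by (cases "l = m") (auto intro!: differentiable_diff differentiable_minus differentiable_mult g_differentiable
      raise_form_differentiable p_differentiable)

lemma LC_sym: "y \<in> U \<Longrightarrow> LC g y l m n = LC g y l n m"
  unfolding LC_def using pd_g_sym[of y m n] by (simp add: algebra_simps)

lemma lower_raise_form: "y \<in> U \<Longrightarrow> (\<Sum>a\<in>UNIV. g y $ a $ s * raise_form g p y a) = p y s"
proof -
  assume y: "y \<in> U"
  have "(\<Sum>a\<in>UNIV. g y $ a $ s * raise_form g p y a)
      = (\<Sum>r\<in>UNIV. (\<Sum>a\<in>UNIV. g y $ s $ a * ginv g y a r) * p y r)"
    unfolding raise_form_def
    by (simp add: sum_distrib_left sum_distrib_right g_sym[OF y, of _ s] algebra_simps) (rule sum.swap)
  also have "\<dots> = p y s" by (simp add: g_ginv[OF y] mult_if_zero)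
  finally show ?thesis .
qed

lemma LC_lowered: assumes y: "y \<in> U"
  shows "(\<Sum>s\<in>UNIV. LC g y s k i * g y $ s $ j) =
    (pd (\<lambda>z. g z $ j $ i) k y + pd (\<lambda>z. g z $ j $ k) i y - pd (\<lambda>z. g z $ k $ i) j y) / 2"
proof -
  define X where "X t = pd (\<lambda>z. g z $ t $ i) k y + pd (\<lambda>z. g z $ t $ k) i y - pd (\<lambda>z. g z $ k $ i) t y" for t
  have ginv_g': "(\<Sum>s\<in>UNIV. ginv g y s t * g y $ s $ j) = (if t = j then 1 else 0)" for t
    using ginv_g[OF y, of t j] by (simp add: ginv_sym[OF y, of t])
  have "(\<Sum>s\<in>UNIV. LC g y s k i * g y $ s $ j) = (\<Sum>s\<in>UNIV. \<Sum>t\<in>UNIV. (ginv g y s t * g y $ s $ j) * X t / 2)"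
    unfolding LC_def X_def
    by (simp add: sum_distrib_left sum_distrib_right sum_divide_distrib add_divide_distrib
        diff_divide_distrib algebra_simps)
  also have "\<dots> = (\<Sum>t\<in>UNIV. (\<Sum>s\<in>UNIV. ginv g y s t * g y $ s $ j) * X t) / 2"
    by (subst sum.swap) (simp add: sum_distrib_right sum_divide_distrib)
  also have "\<dots> = X j / 2" by (simp add: ginv_g' mult_if_zero)
  finally show ?thesis unfolding X_def .
qed

lemma LC_metric: assumes y: "y \<in> U"
  shows "pd (\<lambda>z. g z $ i $ j) k y = (\<Sum>s\<in>UNIV. LC g y s k i * g y $ s $ j + LC g y s k j * g y $ i $ s)"
proof -
  have "(\<Sum>s\<in>UNIV. LC g y s k j * g y $ i $ s) = (\<Sum>s\<in>UNIV. LC g y s k j * g y $ s $ i)"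
    by (simp add: g_sym[OF y, of i])
  then show ?thesis
    using pd_g_sym[OF y, of i j k] pd_g_sym[OF y, of j k i] pd_g_sym[OF y, of i k j]
    by (simp add: sum.distrib LC_lowered[OF y] field_simps)
qed

lemma G_lowered: assumes y: "y \<in> U"
  shows "(\<Sum>s\<in>UNIV. G y s m n * g y $ s $ r) =
    (pd (\<lambda>z. g z $ n $ r) m y + pd (\<lambda>z. g z $ m $ r) n y - pd (\<lambda>z. g z $ m $ n) r y) / 2
    + g y $ r $ m * p y n - g y $ m $ n * p y r"
proof -
  define A where "A r m n = (\<Sum>s\<in>UNIV. G y s m n * g y $ s $ r)" for r m n
  define dg where "dg m n r = pd (\<lambda>z. g z $ n $ r) m y" for m n r
  have "2 * A r m n = dg m n r + dg n m r - dg r m n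
      + (g y $ m $ r * p y n - g y $ n $ r * p y m) - (g y $ m $ n * p y r - g y $ r $ n * p y m)
      - (g y $ n $ m * p y r - g y $ r $ m * p y n)"
  proof (rule koszul_formula)
    show "dg m n r = A r m n + A n m r" for m n r
      using G_metric[OF y, of n r m] unfolding A_def dg_def by (simp add: g_sym[OF y, of n])
    show "A r m n - A r n m = g y $ m $ r * p y n - g y $ n $ r * p y m" for r m n
      unfolding A_def
      by (simp add: sum_subtractf[symmetric] left_diff_distrib[symmetric] G_torsion[OF y]
          left_diff_distrib mult_if_zero sum_subtractf)
  qed
  then show ?thesis
    using g_sym[OF y, of n r] g_sym[OF y, of m r] g_sym[OF y, of n m]
    unfolding A_def dg_def by (simp add: field_simps)
qed

lemma G_eq_LC_plus_contorsion: assumes y: "y \<in> U"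
  shows "G y l m n = LC g y l m n + contorsion (g y) (p y) (raise_form g p y) l m n"
proof -
  define dg where "dg m n r = pd (\<lambda>z. g z $ n $ r) m y" for m n r
  have ginv_g': "(\<Sum>r\<in>UNIV. ginv g y l r * g y $ s $ r) = (if l = s then 1 else 0)" for s
    using ginv_g[OF y, of l s] by (simp add: g_sym[OF y, of s])
  have "G y l m n = (\<Sum>s\<in>UNIV. G y s m n * (\<Sum>r\<in>UNIV. ginv g y l r * g y $ s $ r))"
    by (simp add: ginv_g' mult_if_zero)
  also have "\<dots> = (\<Sum>r\<in>UNIV. ginv g y l r * (\<Sum>s\<in>UNIV. G y s m n * g y $ s $ r))"
    by (simp add: sum_distrib_left algebra_simps) (rule sum.swap)
  also have "\<dots> = (\<Sum>r\<in>UNIV. ginv g y l r * (dg m n r + dg n m r - dg r m n) / 2)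
      + (\<Sum>r\<in>UNIV. ginv g y l r * g y $ r $ m) * p y n - g y $ m $ n * raise_form g p y l"
    unfolding G_lowered[OF y] raise_form_def dg_def
    by (simp add: sum.distrib sum_subtractf sum_distrib_left sum_distrib_right ring_distribs mult_ac)
  also have "\<dots> = LC g y l m n + contorsion (g y) (p y) (raise_form g p y) l m n"
  proof -
    have "(\<Sum>r\<in>UNIV. ginv g y l r * (dg m n r + dg n m r - dg r m n) / 2) = LC g y l m n"
      unfolding LC_def dg_def using pd_g_sym[OF y]
      by (simp add: algebra_simps sum_divide_distrib[symmetric])
    then show ?thesis by (simp add: ginv_g[OF y] contorsion_def)
  qed
  finally show ?thesis .
qed

lemma pd_lower_raise_form: assumes x: "x \<in> U"
  shows "(\<Sum>a\<in>UNIV. pd (\<lambda>y. g y $ a $ m) n x * raise_form g p x a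
      + g x $ a $ m * pd (\<lambda>y. raise_form g p y a) n x) = pd (\<lambda>y. p y m) n x"
proof -
  have "pd (\<lambda>y. p y m) n x = pd (\<lambda>y. \<Sum>a\<in>UNIV. g y $ a $ m * raise_form g p y a) n x"
    by (rule pd_eq_on_open[OF open_U x]) (simp add: lower_raise_form)
  also have "\<dots> = (\<Sum>a\<in>UNIV. pd (\<lambda>y. g y $ a $ m * raise_form g p y a) n x)"
    by (rule pd_sum) (auto intro!: differentiable_mult g_differentiable raise_form_differentiable x)
  also have "\<dots> = (\<Sum>a\<in>UNIV. pd (\<lambda>y. g y $ a $ m) n x * raise_form g p x a
      + g x $ a $ m * pd (\<lambda>y. raise_form g p y a) n x)"
    by (simp add: pd_mult g_differentiable raise_form_differentiable x add.commute)
  finally show ?thesis ..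
qed

lemma pd_contorsion: assumes x: "x \<in> U"
  shows "pd (\<lambda>y. contorsion (g y) (p y) (raise_form g p y) l m n) k x
    = contorsion (g x) (\<lambda>j. pd (\<lambda>y. p y j) k x) (\<lambda>j. pd (\<lambda>y. raise_form g p y j) k x) l m n
      - pd (\<lambda>y. g y $ m $ n) k x * raise_form g p x l"
proof (cases "l = m")
  case True
  then show ?thesis unfolding contorsion_def
    by (simp add: pd_diff pd_mult differentiable_mult g_differentiable raise_form_differentiable
        p_differentiable x)
next
  case False
  then show ?thesis unfolding contorsion_def
    by (simp add: pd_diff[where f="\<lambda>y. 0", simplified] pd_mult differentiable_mult g_differentiable
        raise_form_differentiable x)
qed

lemma cov_LC_raise_form: assumes x: "x \<in> U"
  shows "cov_LC g p x k r = (\<Sum>a\<in>UNIV. g x $ r $ a *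
    (pd (\<lambda>y. raise_form g p y a) k x + (\<Sum>s\<in>UNIV. LC g x a k s * raise_form g p x s)))"
proof -
  let ?P = "raise_form g p x" and ?L = "LC g x"
  have "(\<Sum>a\<in>UNIV. pd (\<lambda>y. g y $ a $ r) k x * ?P a)
      = (\<Sum>a\<in>UNIV. \<Sum>s\<in>UNIV. ?L s k a * g x $ s $ r * ?P a)
        + (\<Sum>a\<in>UNIV. \<Sum>s\<in>UNIV. ?L s k r * (g x $ a $ s * ?P a))"
    unfolding LC_metric[OF x] by (simp add: sum_distrib_right sum_distrib_left sum.distrib algebra_simps)
  also have "(\<Sum>a\<in>UNIV. \<Sum>s\<in>UNIV. ?L s k r * (g x $ a $ s * ?P a)) = (\<Sum>s\<in>UNIV. ?L s k r * p x s)"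
    by (subst sum.swap) (simp add: sum_distrib_left[symmetric] lower_raise_form[OF x])
  also have "(\<Sum>a\<in>UNIV. \<Sum>s\<in>UNIV. ?L s k a * g x $ s $ r * ?P a)
      = (\<Sum>a\<in>UNIV. \<Sum>s\<in>UNIV. g x $ r $ a * (?L a k s * ?P s))"
    by (subst sum.swap) (simp add: g_sym[OF x, of _ r] algebra_simps)
  finally have "(\<Sum>a\<in>UNIV. pd (\<lambda>y. g y $ a $ r) k x * ?P a)
      = (\<Sum>a\<in>UNIV. \<Sum>s\<in>UNIV. g x $ r $ a * (?L a k s * ?P s)) + (\<Sum>s\<in>UNIV. ?L s k r * p x s)" .
  with pd_lower_raise_form[OF x, of r k] show ?thesis
    unfolding cov_LC_def
    by (simp add: sum.distrib distrib_left sum_distrib_left g_sym[OF x, of _ r])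
qed

lemma div_form_raise_form: assumes x: "x \<in> U"
  shows "div_form g p x
    = (\<Sum>a\<in>UNIV. pd (\<lambda>y. raise_form g p y a) a x) + (\<Sum>a\<in>UNIV. \<Sum>s\<in>UNIV. LC g x a a s * raise_form g p x s)"
proof -
  define D where "D l a = pd (\<lambda>y. raise_form g p y a) l x + (\<Sum>s\<in>UNIV. LC g x a l s * raise_form g p x s)"
    for l a
  have "div_form g p x = (\<Sum>l\<in>UNIV. \<Sum>k\<in>UNIV. \<Sum>a\<in>UNIV. ginv g x l k * g x $ k $ a * D l a)"
    unfolding div_form_def cov_LC_raise_form[OF x] D_def[symmetric] by (simp add: sum_distrib_left mult.assoc)
  also have "\<dots> = (\<Sum>l\<in>UNIV. \<Sum>a\<in>UNIV. (\<Sum>k\<in>UNIV. ginv g x l k * g x $ k $ a) * D l a)"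
    by (rule sum.cong[OF refl]) (simp add: sum_distrib_right, rule sum.swap)
  also have "\<dots> = (\<Sum>l\<in>UNIV. D l l)" by (simp add: ginv_g[OF x] mult_if_zero)
  finally show ?thesis unfolding D_def by (simp add: sum.distrib)
qed

lemma sq_form_raise_form: "sq_form g p x = (\<Sum>s\<in>UNIV. raise_form g p x s * p x s)"
  unfolding sq_form_def raise_form_def by (simp add: sum_distrib_left sum_distrib_right algebra_simps)

lemma Ric_semi_symmetric_eq: assumes x: "x \<in> U"
  shows "Ric G x m n = Ric (LC g) x m n - 2 * cov_LC g p x n m - g x $ n $ m * div_form g p x
    + 2 * p x m * p x n - 2 * g x $ n $ m * sq_form g p x"
proof -
  let ?dK = "\<lambda>k. contorsion (g x) (\<lambda>j. pd (\<lambda>y. p y j) k x) (\<lambda>j. pd (\<lambda>y. raise_form g p y j) k x)"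
  have pd_G: "pd (\<lambda>y. G y l i j) k x = pd (\<lambda>y. LC g y l i j) k x
      + (?dK k l i j - pd (\<lambda>y. g y $ i $ j) k x * raise_form g p x l)" for l i j k
  proof -
    have "pd (\<lambda>y. G y l i j) k x = pd (\<lambda>y. LC g y l i j + contorsion (g y) (p y) (raise_form g p y) l i j) k x"
      by (rule pd_eq_on_open[OF open_U x]) (rule G_eq_LC_plus_contorsion)
    then show ?thesis
      by (simp add: pd_add LC_differentiable contorsion_differentiable pd_contorsion x)
  qed
  have "Ric G x m n = ricci_jet (\<lambda>k l i j. pd (\<lambda>y. LC g y l i j) k x
        + (?dK k l i j - pd (\<lambda>y. g y $ i $ j) k x * raise_form g p x l))
      (\<lambda>l i j. LC g x l i j + contorsion (g x) (p x) (raise_form g p x) l i j) m n"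
    unfolding Ric_eq_ricci_jet pd_G G_eq_LC_plus_contorsion[OF x] ..
  also have "\<dots> = Ric (LC g) x m n
      - (real CARD(4) - 2) * (pd (\<lambda>y. p y m) n x - (\<Sum>s\<in>UNIV. LC g x s n m * p x s))
      - g x $ n $ m * ((\<Sum>a\<in>UNIV. pd (\<lambda>y. raise_form g p y a) a x)
        + (\<Sum>a\<in>UNIV. \<Sum>s\<in>UNIV. LC g x a a s * raise_form g p x s))
      + (real CARD(4) - 2) * (p x m * p x n - g x $ n $ m * (\<Sum>s\<in>UNIV. raise_form g p x s * p x s))"
    unfolding Ric_eq_ricci_jet[of "LC g"]
    by (rule ricci_jet_plus_contorsion[where dg="\<lambda>k i j. pd (\<lambda>y. g y $ i $ j) k x",
          OF g_sym[OF x] lower_raise_form[OF x] LC_sym[OF x] LC_metric[OF x] pd_lower_raise_form[OF x]])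
  finally show ?thesis
    unfolding cov_LC_def div_form_raise_form[OF x] sq_form_raise_form by simp
qed

section \<open>The generalized Einstein condition\<close>

lemma sym_Ric_smooth: "smooth_on U (\<lambda>y. sym_Ric G y m n)"
proof -
  have "smooth_on U (\<lambda>y. (Ric G y m n + Ric G y n m) * inverse 2)"
    unfolding Ric_def Riem_def
    by (intro smooth_on_mult smooth_on_add smooth_on_sum smooth_on_diff smooth_on_const smooth_on_pd
        G_smooth open_U) auto
  then show ?thesis by (simp only: sym_Ric_def divide_inverse)
qed

lemma g_frobenius_nz: assumes y: "y \<in> U" shows "(\<Sum>m\<in>UNIV. \<Sum>n\<in>UNIV. g y $ m $ n * g y $ m $ n) \<noteq> 0"
proof
  assume "(\<Sum>m\<in>UNIV. \<Sum>n\<in>UNIV. g y $ m $ n * g y $ m $ n) = 0"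
  then have "g y $ m $ n * g y $ m $ n = 0" for m n
    by (simp add: sum_nonneg_eq_0_iff sum_nonneg)
  then have "g y = mat 0" by (simp add: vec_eq_iff mat_def)
  with g_det_nz[OF y] show False by (metis det_0)
qed

lemma ginv_trace_g: "x \<in> U \<Longrightarrow> (\<Sum>m\<in>UNIV. \<Sum>n\<in>UNIV. ginv g x m n * g x $ m $ n) = 4"
  unfolding ginv_def using trace_matrix_inv_symmetric[OF g_det_nz g_sym] by simp

lemma sym_Ric_semi_symmetric_eq: assumes x: "x \<in> U"
  shows "sym_Ric G x m n = sym_Ric (LC g) x m n
    - 3/2 * (div_form g p x + sq_form g p x) * g x $ m $ n + einstein_defect g p x m n"
  unfolding sym_Ric_def Ric_semi_symmetric_eq[OF x, of m n] Ric_semi_symmetric_eq[OF x, of n m] einstein_defect_def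
  using g_sym[OF x, of n m] by (simp add: field_simps)

lemma einstein_defect_tracefree: assumes x: "x \<in> U"
  shows "(\<Sum>m\<in>UNIV. \<Sum>n\<in>UNIV. ginv g x m n * einstein_defect g p x m n) = 0"
proof -
  have "(\<Sum>m\<in>UNIV. \<Sum>n\<in>UNIV. ginv g x m n * cov_LC g p x n m) = div_form g p x"
    unfolding div_form_def by (subst sum.swap) (simp add: ginv_sym[OF x])
  moreover have "(\<Sum>m\<in>UNIV. \<Sum>n\<in>UNIV. ginv g x m n * (p x n * p x m)) = sq_form g p x"
    unfolding sq_form_def by (simp add: algebra_simps)
  moreover have "ginv g x m n * einstein_defect g p x m n
      = - (ginv g x m n * cov_LC g p x m n) - ginv g x m n * cov_LC g p x n m
        + 2 * (ginv g x m n * (p x n * p x m))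
        + (div_form g p x - sq_form g p x) / 2 * (ginv g x m n * g x $ m $ n)" for m n
    unfolding einstein_defect_def by (simp add: field_simps)
  ultimately have "(\<Sum>m\<in>UNIV. \<Sum>n\<in>UNIV. ginv g x m n * einstein_defect g p x m n)
      = - 2 * div_form g p x + 2 * sq_form g p x + (div_form g p x - sq_form g p x) / 2 * 4"
    using ginv_trace_g[OF x]
    by (simp add: sum.distrib sum_subtractf sum_negf sum_distrib_left[symmetric]
        sum_divide_distrib[symmetric] div_form_def[symmetric])
  then show ?thesis by (simp add: field_simps)
qed

lemma multiple_of_g_tracefree_eq_zero:
  assumes x: "x \<in> U" and "(\<Sum>m\<in>UNIV. \<Sum>n\<in>UNIV. ginv g x m n * (c * g x $ m $ n)) = 0"
  shows "c = 0"
proof -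
  have "c * (\<Sum>m\<in>UNIV. \<Sum>n\<in>UNIV. ginv g x m n * g x $ m $ n) = 0"
    using assms(2) by (simp add: sum_distrib_left algebra_simps)
  then show ?thesis using ginv_trace_g[OF x] by simp
qed

lemma generalized_einsteinI:
  assumes "\<And>x m n. x \<in> U \<Longrightarrow> sym_Ric G x m n = f x * g x $ m $ n"
  shows "generalized_einstein U g G"
proof -
  (* f itself need not be smooth; the factor is recovered as a quotient of smooth functions. *)
  define lam' where "lam' y = (\<Sum>m\<in>UNIV. \<Sum>n\<in>UNIV. sym_Ric G y m n * g y $ m $ n)
      * inverse (\<Sum>m\<in>UNIV. \<Sum>n\<in>UNIV. g y $ m $ n * g y $ m $ n)" for y
  have "smooth_on U lam'"
    unfolding lam'_def
    by (intro smooth_on_mult smooth_on_inverse smooth_on_sum open_U sym_Ric_smooth g_smooth g_frobenius_nz)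
      auto
  moreover have "lam' x = f x" if x: "x \<in> U" for x
  proof -
    have "(\<Sum>m\<in>UNIV. \<Sum>n\<in>UNIV. f x * g x $ m $ n * g x $ m $ n)
        = f x * (\<Sum>m\<in>UNIV. \<Sum>n\<in>UNIV. g x $ m $ n * g x $ m $ n)"
      by (simp add: sum_distrib_left mult.assoc)
    then show ?thesis
      unfolding lam'_def assms[OF x] using g_frobenius_nz[OF x] by simp
  qed
  ultimately show ?thesis
    unfolding generalized_einstein_def using assms by auto
qed

lemma generalized_einstein_iff_tracefree_part_zero:
  assumes decomp: "\<And>x m n. x \<in> U \<Longrightarrow> sym_Ric G x m n = f x * g x $ m $ n + E x m n"
    and tracefree: "\<And>x. x \<in> U \<Longrightarrow> (\<Sum>m\<in>UNIV. \<Sum>n\<in>UNIV. ginv g x m n * E x m n) = 0"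
  shows "generalized_einstein U g G \<longleftrightarrow> (\<forall>x\<in>U. \<forall>m n. E x m n = 0)"
proof
  assume "generalized_einstein U g G"
  then obtain lam' where lam': "\<And>x m n. x \<in> U \<Longrightarrow> sym_Ric G x m n = lam' x * g x $ m $ n"
    unfolding generalized_einstein_def by blast
  have E_eq: "E x m n = (lam' x - f x) * g x $ m $ n" if "x \<in> U" for x m n
    using decomp[OF that] lam'[OF that] by (simp add: algebra_simps)
  have "lam' x - f x = 0" if "x \<in> U" for x
    using tracefree[OF that] unfolding E_eq[OF that] by (rule multiple_of_g_tracefree_eq_zero[OF that])
  then show "\<forall>x\<in>U. \<forall>m n. E x m n = 0" by (simp add: E_eq)
next
  assume "\<forall>x\<in>U. \<forall>m n. E x m n = 0"
  then show "generalized_einstein U g G"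
    by (intro generalized_einsteinI[of f]) (simp add: decomp)
qed

end

theorem mainTheorem9:
  fixes U :: "(real^4) set"
    and g :: "real^4 \<Rightarrow> real^4^4"
    and G :: "real^4 \<Rightarrow> 4 \<Rightarrow> 4 \<Rightarrow> 4 \<Rightarrow> real"
    and p :: "real^4 \<Rightarrow> 4 \<Rightarrow> real"
  assumes "open U"
    and "semi_riemannian_metric U g"
    and "einstein_metric U g"
    and "semi_symmetric_metric_connection U g G p"
  shows "generalized_einstein U g G \<longleftrightarrow>
    (\<forall>x\<in>U. \<forall>m n.
       - cov_LC g p x m n - cov_LC g p x n m + 2 * p x n * p x m
       + (1/2) * g x $ m $ n * (\<Sum>l\<in>UNIV. \<Sum>k\<in>UNIV. ginv g x l k * cov_LC g p x l k)
       - (1/2) * g x $ m $ n * (\<Sum>l\<in>UNIV. \<Sum>k\<in>UNIV. ginv g x l k * p x l * p x k) = 0)"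
proof -
  interpret semi_symmetric_chart U g G p
    using assms(1,2,4) by unfold_locales
  obtain lam where lam: "\<And>x m n. x \<in> U \<Longrightarrow> Ric (LC g) x m n = lam x * g x $ m $ n"
    using assms(3) unfolding einstein_metric_def by blast
  have "sym_Ric G x m n = (lam x - 3/2 * (div_form g p x + sq_form g p x)) * g x $ m $ n
      + einstein_defect g p x m n" if "x \<in> U" for x m n
    using sym_Ric_semi_symmetric_eq[OF that] lam[OF that] g_sym[OF that, of n m]
    by (simp add: sym_Ric_def algebra_simps)
  from generalized_einstein_iff_tracefree_part_zero[OF this einstein_defect_tracefree]
  show ?thesis
    unfolding einstein_defect_def div_form_def sq_form_def .
qed

end
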